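(* Let $\Pi$ be the set of graphs $G$ satisfying $\sum_{H:|V(H)|=4} w_H\cdot p(H,G)\le \frac{5}{16}$, where $w_{K_4}=1$, $w_{\bar{K_4}}=\frac12$, $w_{D_4}=\frac{5}{12}$, $w_{\bar{D_4}}=\frac{5}{12}$, $w_{P_3}=\frac13$, $w_{\bar{P_3}}=\frac16$, $w_{C_4}=\frac12$, $w_{\bar{C_4}}=\frac13$, $w_{K_{1,3}}=\frac14$, $w_{\bar{K_{1,3}}}=\frac14$, $w_{P_4}=\frac14$. Let $n\ge4$ and let $G\sim G(n,1/2)$. Then $G\in\Pi$ with probability at least $\frac{1}{2n^4}$.
   Context: $K_4$ is the complete graph on 4 vertices, $D_4$ is $K_4$ minus an edge, $P_3$ is the 4-vertex graph consisting of a path on 3 vertices plus an isolated vertex, $C_4$ the 4-cycle, $P_4$ the path on 4 vertices, $K_{1,3}$ the star on 4 vertices, and $\bar H$ the complement of $H$. $p(H,G)$ is the fraction of induced subgraphs of $G$ on $|V(H)|$ vertices isomorphic to $H$. $G(n,1/2)$ is the uniformly random graph on $n$ labeled vertices (each pair an edge independently with probability $1/2$). *)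

theory Defs
  imports Complex_Main
begin

text \<open>Simple graphs on a finite vertex set V (of naturals), given by an edge set E
  of 2-element subsets of V.\<close>

definition pairs_on :: "nat set \<Rightarrow> nat set set" where
  "pairs_on V = {e. \<exists>i\<in>V. \<exists>j\<in>V. i \<noteq> j \<and> e = {i, j}}"

definition compl_graph :: "nat set \<Rightarrow> nat set set \<Rightarrow> nat set set" where
  "compl_graph V E = pairs_on V - E"

definition induced_iso ::
  "nat set \<Rightarrow> nat set set \<Rightarrow> nat set set \<Rightarrow> nat set \<Rightarrow> bool" where
  "induced_iso VH EH EG S \<longleftrightarrow>
     (\<exists>f. bij_betw f VH S \<and>
          (\<forall>i\<in>VH. \<forall>j\<in>VH. i \<noteq> j \<longrightarrow> ({i, j} \<in> EH \<longleftrightarrow> {f i, f j} \<in> EG)))"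

definition ind_density ::
  "nat set \<Rightarrow> nat set set \<Rightarrow> nat set \<Rightarrow> nat set set \<Rightarrow> real" where
  "ind_density VH EH VG EG =
     real (card {S. S \<subseteq> VG \<and> card S = card VH \<and> induced_iso VH EH EG S})
     / real (card VG choose card VH)"

abbreviation V4 :: "nat set" where "V4 \<equiv> {0..<4}"

definition K4 :: "nat set set" where "K4 = pairs_on V4"
definition D4 :: "nat set set" where "D4 = pairs_on V4 - {{2,3}}"
definition P3 :: "nat set set" where "P3 = {{0,1},{1,2}}"
definition C4 :: "nat set set" where "C4 = {{0,1},{1,2},{2,3},{3,0}}"
definition P4 :: "nat set set" where "P4 = {{0,1},{1,2},{2,3}}"
definition K13 :: "nat set set" where "K13 = {{0,1},{0,2},{0,3}}"

definition weighted_sum :: "nat set \<Rightarrow> nat set set \<Rightarrow> real" where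
  "weighted_sum V E =
       1 * ind_density V4 K4 V E
     + 1/2 * ind_density V4 (compl_graph V4 K4) V E
     + 5/12 * ind_density V4 D4 V E
     + 5/12 * ind_density V4 (compl_graph V4 D4) V E
     + 1/3 * ind_density V4 P3 V E
     + 1/6 * ind_density V4 (compl_graph V4 P3) V E
     + 1/2 * ind_density V4 C4 V E
     + 1/3 * ind_density V4 (compl_graph V4 C4) V E
     + 1/4 * ind_density V4 K13 V E
     + 1/4 * ind_density V4 (compl_graph V4 K13) V E
     + 1/4 * ind_density V4 P4 V E"

definition in_Pi :: "nat set \<Rightarrow> nat set set \<Rightarrow> bool" where
  "in_Pi V E \<longleftrightarrow> weighted_sum V E \<le> 5/16"

text \<open>Probability that G(n,1/2) (uniform over edge sets on vertex set {0..<n}) satisfies P.\<close>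
definition prob_gnp_half :: "nat \<Rightarrow> (nat set set \<Rightarrow> bool) \<Rightarrow> real" where
  "prob_gnp_half n P =
     real (card {E. E \<subseteq> pairs_on {0..<n} \<and> P E}) / real (card (Pow (pairs_on {0..<n})))"

end

theory Submission
  imports Defs "HOL-Combinatorics.Multiset_Permutations"
begin

(* A fixed k-set of vertices of G(n,1/2) induces a copy of H with probability c(H) / 2^(k choose 2),
   where c(H) is the number of labelled copies of H on its own vertex set.  For the eleven weighted
   4-vertex graphs the weighted sum of the c(H) is 20, so the expected weighted sum of densities is
   exactly 20/64 = 5/16.  Multiplied by 12 (n choose 4) the weighted sum is an integer X, and 4X has
   mean m = 15 (n choose 4); a nonnegative integer variable with mean at most m is at most m with
   probability at least 1/(m+1), and m + 1 <= 2 n^4. *)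

lemma pairs_on_eq: "pairs_on V = {e. e \<subseteq> V \<and> card e = 2}"
  unfolding pairs_on_def by (auto simp: card_2_iff)

lemma Ball_pairs_on: "(\<forall>e\<in>pairs_on V. P e) \<longleftrightarrow> (\<forall>i\<in>V. \<forall>j\<in>V. i \<noteq> j \<longrightarrow> P {i, j})"
  unfolding pairs_on_def by blast

lemma pairs_on_subset_Pow: "pairs_on V \<subseteq> Pow V"
  unfolding pairs_on_eq by blast

lemma finite_pairs_on: "finite V \<Longrightarrow> finite (pairs_on V)"
  using pairs_on_subset_Pow finite_subset by blast

lemma card_pairs_on: "finite V \<Longrightarrow> card (pairs_on V) = card V choose 2"
  unfolding pairs_on_eq by (rule n_subsets)

lemma pairs_on_mono: "S \<subseteq> V \<Longrightarrow> pairs_on S \<subseteq> pairs_on V"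
  unfolding pairs_on_eq by blast

lemma pairs_on_bij_image:
  assumes "bij_betw g V S"
  shows "pairs_on S = image g ` pairs_on V"
proof -
  have inj: "inj_on g V" and S: "S = g ` V"
    using assms by (auto simp: bij_betw_def)
  have "card (g ` e) = card e" if "e \<subseteq> V" for e
    using inj that by (simp add: card_image inj_on_subset)
  then show ?thesis
    unfolding pairs_on_eq S by (auto simp: subset_image_iff)
qed

lemma induced_iso_restrict:
  "induced_iso VH H E S \<longleftrightarrow> induced_iso VH H (E \<inter> pairs_on S) S"
proof -
  have "{f i, f j} \<in> pairs_on S" if "bij_betw f VH S" "i \<in> VH" "j \<in> VH" "i \<noteq> j" for f i j
    using that unfolding bij_betw_def inj_on_def pairs_on_def by auto
  then show ?thesis
    unfolding induced_iso_def by (intro ex_cong1 conj_cong refl) auto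
qed

lemma eq_image_iff_inj_on:
  assumes "inj_on h A" "H \<subseteq> A" "F \<subseteq> h ` A"
  shows "F = h ` H \<longleftrightarrow> (\<forall>e\<in>A. e \<in> H \<longleftrightarrow> h e \<in> F)"
proof
  assume "F = h ` H"
  then show "\<forall>e\<in>A. e \<in> H \<longleftrightarrow> h e \<in> F"
    using assms(1,2) by (auto simp: inj_on_image_mem_iff)
next
  assume "\<forall>e\<in>A. e \<in> H \<longleftrightarrow> h e \<in> F"
  then show "F = h ` H"
    using assms(2,3) by blast
qed

lemma induced_iso_iff_image:
  assumes H: "H \<subseteq> pairs_on VH" and F: "F \<subseteq> pairs_on S"
  shows "induced_iso VH H F S \<longleftrightarrow> (\<exists>f. bij_betw f VH S \<and> F = image f ` H)"
proof -
  have edges_iff: "(\<forall>i\<in>VH. \<forall>j\<in>VH. i \<noteq> j \<longrightarrow> ({i, j} \<in> H \<longleftrightarrow> {f i, f j} \<in> F)) \<longleftrightarrow> F = image f ` H"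
    if f: "bij_betw f VH S" for f
  proof -
    have inj: "inj_on (image f) (pairs_on VH)"
      using inj_on_image_Pow[OF bij_betw_imp_inj_on[OF f]] pairs_on_subset_Pow by (rule inj_on_subset)
    have F': "F \<subseteq> image f ` pairs_on VH"
      using F pairs_on_bij_image[OF f] by simp
    have "(\<forall>i\<in>VH. \<forall>j\<in>VH. i \<noteq> j \<longrightarrow> ({i, j} \<in> H \<longleftrightarrow> {f i, f j} \<in> F))
          \<longleftrightarrow> (\<forall>e\<in>pairs_on VH. e \<in> H \<longleftrightarrow> f ` e \<in> F)"
      by (simp add: Ball_pairs_on)
    also have "\<dots> \<longleftrightarrow> F = image f ` H"
      by (rule eq_image_iff_inj_on[OF inj H F', symmetric])
    finally show ?thesis .
  qed
  then show ?thesis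
    unfolding induced_iso_def by (intro ex_cong1 conj_cong refl) (rule edges_iff)
qed

definition copies :: "nat set \<Rightarrow> nat set set \<Rightarrow> nat set \<Rightarrow> nat set set set" where
  "copies VH H S = {image f ` H | f. bij_betw f VH S}"

lemma copiesI: "bij_betw f VH S \<Longrightarrow> image f ` H \<in> copies VH H S"
  unfolding copies_def by blast

lemma copiesE:
  assumes "F \<in> copies VH H S"
  obtains f where "bij_betw f VH S" "F = image f ` H"
  using assms unfolding copies_def by blast

lemma induced_iso_edge_sets_eq_copies:
  assumes H: "H \<subseteq> pairs_on VH"
  shows "{F. F \<subseteq> pairs_on S \<and> induced_iso VH H F S} = copies VH H S"
proof (intro set_eqI iffI)
  fix F assume "F \<in> {F. F \<subseteq> pairs_on S \<and> induced_iso VH H F S}"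
  then have F: "F \<subseteq> pairs_on S" and iso: "induced_iso VH H F S"
    by auto
  then show "F \<in> copies VH H S"
    using induced_iso_iff_image[OF H F] unfolding copies_def by blast
next
  fix F assume "F \<in> copies VH H S"
  then obtain f where f: "bij_betw f VH S" and F: "F = image f ` H"
    by (rule copiesE)
  have sub: "F \<subseteq> pairs_on S"
    unfolding F pairs_on_bij_image[OF f] using H by (rule image_mono)
  then show "F \<in> {F. F \<subseteq> pairs_on S \<and> induced_iso VH H F S}"
    using induced_iso_iff_image[OF H sub] f F by blast
qed

lemma copies_bij_transfer:
  assumes g: "bij_betw g V S" and H: "H \<subseteq> Pow V"
  shows "copies V H S = image (image g) ` copies V H V"
proof (intro equalityI subsetI)
  fix x assume "x \<in> image (image g) ` copies V H V"
  then obtain h where h: "bij_betw h V V" and x: "x = image g ` image h ` H"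
    unfolding copies_def by auto
  have "x = image (g \<circ> h) ` H"
    unfolding x by (simp add: image_comp)
  moreover have "bij_betw (g \<circ> h) V S"
    using h g by (rule bij_betw_trans)
  ultimately show "x \<in> copies V H S"
    using copiesI by metis
next
  fix x assume "x \<in> copies V H S"
  then obtain f where f: "bij_betw f V S" and x: "x = image f ` H"
    by (rule copiesE)
  define h where "h = inv_into V g \<circ> f"
  have h: "bij_betw h V V"
    unfolding h_def using f bij_betw_inv_into[OF g] by (rule bij_betw_trans)
  have "g (h v) = f v" if "v \<in> V" for v
    using f_inv_into_f[of "f v" g V] bij_betw_apply[OF f that] g
    unfolding h_def bij_betw_def by simp
  then have "image f e = image g (image h e)" if "e \<in> H" for e
    using that H by (force simp: image_image intro!: image_cong)
  then have "x = image g ` image h ` H"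
    unfolding x image_image by (rule image_cong[OF refl])
  then show "x \<in> image (image g) ` copies V H V"
    using h unfolding copies_def by blast
qed

lemma card_copies_bij_transfer:
  assumes g: "bij_betw g V S" and H: "H \<subseteq> Pow V"
  shows "card (copies V H S) = card (copies V H V)"
proof -
  have "copies V H V \<subseteq> Pow (Pow V)"
    unfolding copies_def using H by (auto simp: bij_betw_def)
  moreover have "inj_on (image (image g)) (Pow (Pow V))"
    using g by (intro inj_on_image_Pow bij_betw_imp_inj_on)
  ultimately have "inj_on (image (image g)) (copies V H V)"
    by (rule inj_on_subset[rotated])
  then show ?thesis
    unfolding copies_bij_transfer[OF assms] by (rule card_image)
qed

lemma card_subsets_determined_by_trace:
  assumes "finite P" "A \<subseteq> P"
  shows "card {E. E \<subseteq> P \<and> Q (E \<inter> A)} = card {F. F \<subseteq> A \<and> Q F} * 2 ^ card (P - A)"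
proof -
  have "bij_betw (\<lambda>E. (E \<inter> A, E - A)) {E. E \<subseteq> P \<and> Q (E \<inter> A)} ({F. F \<subseteq> A \<and> Q F} \<times> Pow (P - A))"
  proof (rule bij_betw_byWitness[where f' = "\<lambda>(F, R). F \<union> R"])
    have "(F \<union> R) \<inter> A = F" "(F \<union> R) - A = R" if "F \<subseteq> A" "R \<subseteq> P - A" for F R
      using that by blast+
    then show "\<forall>a'\<in>{F. F \<subseteq> A \<and> Q F} \<times> Pow (P - A). (\<lambda>E. (E \<inter> A, E - A)) ((\<lambda>(F, R). F \<union> R) a') = a'"
      and "(\<lambda>(F, R). F \<union> R) ` ({F. F \<subseteq> A \<and> Q F} \<times> Pow (P - A)) \<subseteq> {E. E \<subseteq> P \<and> Q (E \<inter> A)}"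
      using assms(2) by auto
  qed (use assms(2) in auto)
  then have "card {E. E \<subseteq> P \<and> Q (E \<inter> A)} = card ({F. F \<subseteq> A \<and> Q F} \<times> Pow (P - A))"
    by (rule bij_betw_same_card)
  then show ?thesis
    using assms by (simp add: card_cartesian_product card_Pow)
qed

lemma card_induced_iso_edge_sets:
  assumes "finite V" "finite VH" "S \<subseteq> V" "card S = card VH" and H: "H \<subseteq> pairs_on VH"
  shows "card {E. E \<subseteq> pairs_on V \<and> induced_iso VH H E S} * 2 ^ (card VH choose 2)
       = card (copies VH H VH) * 2 ^ card (pairs_on V)"
proof -
  let ?P = "pairs_on V" and ?A = "pairs_on S"
  have fin: "finite ?P"
    using assms(1) by (rule finite_pairs_on)
  have AP: "?A \<subseteq> ?P"
    using assms(3) by (rule pairs_on_mono)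
  have "finite S"
    using assms(1,3) finite_subset by blast
  then obtain g where g: "bij_betw g VH S"
    using finite_same_card_bij assms(2,4) by metis
  have "card ?P = (card VH choose 2) + card (?P - ?A)"
    using card_pairs_on[OF \<open>finite S\<close>] assms(4) card_Diff_subset[OF finite_subset[OF AP fin] AP]
      card_mono[OF fin AP] by simp
  then have pow: "2 ^ card ?P = 2 ^ (card VH choose 2) * (2::nat) ^ card (?P - ?A)"
    by (simp add: power_add)
  have "card {E. E \<subseteq> ?P \<and> induced_iso VH H E S} = card {E. E \<subseteq> ?P \<and> induced_iso VH H (E \<inter> ?A) S}"
    using induced_iso_restrict by metis
  also have "\<dots> = card {F. F \<subseteq> ?A \<and> induced_iso VH H F S} * 2 ^ card (?P - ?A)"
    using fin AP by (rule card_subsets_determined_by_trace)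
  also have "card {F. F \<subseteq> ?A \<and> induced_iso VH H F S} = card (copies VH H VH)"
    unfolding induced_iso_edge_sets_eq_copies[OF H]
    using g H pairs_on_subset_Pow by (metis card_copies_bij_transfer order.trans)
  finally show ?thesis
    unfolding pow by simp
qed

lemma sum_card_filter_swap:
  assumes "finite A" "finite B"
  shows "(\<Sum>a\<in>A. card {b\<in>B. R a b}) = (\<Sum>b\<in>B. card {a\<in>A. R a b})"
proof -
  have "(\<Sum>a\<in>A. card {b\<in>B. R a b}) = (\<Sum>a\<in>A. \<Sum>b\<in>B. if R a b then 1 else 0)"
    using assms by (simp add: sum.inter_filter[symmetric])
  also have "\<dots> = (\<Sum>b\<in>B. \<Sum>a\<in>A. if R a b then 1 else 0)"
    by (rule sum.swap)
  also have "\<dots> = (\<Sum>b\<in>B. card {a\<in>A. R a b})"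
    using assms by (simp add: sum.inter_filter[symmetric])
  finally show ?thesis .
qed

definition ind_count :: "nat set \<Rightarrow> nat set set \<Rightarrow> nat set \<Rightarrow> nat set set \<Rightarrow> nat" where
  "ind_count VH EH VG EG = card {S. S \<subseteq> VG \<and> card S = card VH \<and> induced_iso VH EH EG S}"

lemma ind_density_eq_ind_count:
  "ind_density VH EH VG EG = real (ind_count VH EH VG EG) / real (card VG choose card VH)"
  unfolding ind_density_def ind_count_def ..

lemma sum_ind_count:
  assumes V: "finite V" and "finite VH" and H: "H \<subseteq> pairs_on VH"
  shows "(\<Sum>E\<in>Pow (pairs_on V). ind_count VH H V E) * 2 ^ (card VH choose 2)
       = card (copies VH H VH) * (card V choose card VH) * 2 ^ card (pairs_on V)"
proof -
  let ?Q = "{S. S \<subseteq> V \<and> card S = card VH}" and ?P = "pairs_on V"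
  have "(\<Sum>E\<in>Pow ?P. ind_count VH H V E) = (\<Sum>E\<in>Pow ?P. card {S\<in>?Q. induced_iso VH H E S})"
    unfolding ind_count_def by (simp add: conj_assoc)
  also have "\<dots> = (\<Sum>S\<in>?Q. card {E\<in>Pow ?P. induced_iso VH H E S})"
    using V finite_pairs_on by (intro sum_card_filter_swap) auto
  finally have "(\<Sum>E\<in>Pow ?P. ind_count VH H V E) * 2 ^ (card VH choose 2)
      = (\<Sum>S\<in>?Q. card {E. E \<subseteq> ?P \<and> induced_iso VH H E S} * 2 ^ (card VH choose 2))"
    by (simp add: sum_distrib_right)
  also have "\<dots> = (\<Sum>S\<in>?Q. card (copies VH H VH) * 2 ^ card ?P)"
    using card_induced_iso_edge_sets[OF V \<open>finite VH\<close> _ _ H] by (intro sum.cong) auto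
  also have "\<dots> = card (copies VH H VH) * (card V choose card VH) * 2 ^ card ?P"
    using n_subsets[OF V] by simp
  finally show ?thesis .
qed

lemma card_le_mult_card_le_mean:
  fixes f :: "'a \<Rightarrow> nat"
  assumes A: "finite A" and mean: "(\<Sum>a\<in>A. f a) \<le> m * card A"
  shows "card A \<le> (m + 1) * card {a\<in>A. f a \<le> m}"
proof -
  let ?B = "{a\<in>A. f a \<le> m}"
  have split: "card A = card (A - ?B) + card ?B"
    using A by (simp add: card_Diff_subset card_mono)
  have "(m + 1) * card (A - ?B) = (\<Sum>a\<in>A - ?B. m + 1)"
    by simp
  also have "\<dots> \<le> (\<Sum>a\<in>A - ?B. f a)"
    by (rule sum_mono) auto
  also have "\<dots> \<le> (\<Sum>a\<in>A. f a)"
    using A by (intro sum_mono2) auto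
  finally have "(m + 1) * card (A - ?B) \<le> m * card A"
    using mean by linarith
  then show ?thesis
    unfolding split by (simp add: algebra_simps)
qed

lemma copies_upto_eq_permutations:
  assumes H: "H \<subseteq> Pow {0..<k}"
  shows "copies {0..<k} H {0..<k} = (\<lambda>p. image ((!) p) ` H) ` permutations_of_set {0..<k}"
proof (intro equalityI subsetI)
  fix x assume "x \<in> copies {0..<k} H {0..<k}"
  then obtain h where h: "bij_betw h {0..<k} {0..<k}" and x: "x = image h ` H"
    by (rule copiesE)
  define p where "p = map h [0..<k]"
  have "p \<in> permutations_of_set {0..<k}"
    using h unfolding p_def permutations_of_set_def by (simp add: distinct_map bij_betw_def)
  moreover have "image h e = image ((!) p) e" if "e \<in> H" for e
  proof (rule image_cong[OF refl])
    fix i assume "i \<in> e"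
    then have "i \<in> {0..<k}"
      using that H by blast
    then show "h i = p ! i"
      unfolding p_def by simp
  qed
  then have "x = image ((!) p) ` H"
    unfolding x by (rule image_cong[OF refl])
  ultimately show "x \<in> (\<lambda>p. image ((!) p) ` H) ` permutations_of_set {0..<k}"
    by (rule rev_image_eqI)
next
  fix x assume "x \<in> (\<lambda>p. image ((!) p) ` H) ` permutations_of_set {0..<k}"
  then obtain p where p: "p \<in> permutations_of_set {0..<k}" and x: "x = image ((!) p) ` H"
    by blast
  have "length p = k"
    using distinct_card[of p] permutations_of_setD[OF p] by simp
  then have "bij_betw ((!) p) {0..<k} {0..<k}"
    using permutations_of_setD[OF p] by (intro bij_betw_nth) (simp_all add: atLeast0LessThan)
  then show "x \<in> copies {0..<k} H {0..<k}"
    unfolding x by (rule copiesI)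
qed

lemma pairs_on_eq_image: "pairs_on V = (\<lambda>(i, j). {i, j}) ` Set.filter (\<lambda>(i, j). i \<noteq> j) (V \<times> V)"
  unfolding pairs_on_def by (auto simp: image_iff)

lemma pairs_on_V4: "pairs_on V4 = {{0, 1}, {0, 2}, {0, 3}, {1, 2}, {1, 3}, {2, 3}}"
  unfolding pairs_on_eq_image by code_simp

(* Weights are 12 times the weights w_H, so that the weighted count is a natural number. *)
definition weighted_graphs4 :: "(nat \<times> nat set set) list" where
  "weighted_graphs4 =
     [(12, K4), (6, compl_graph V4 K4), (5, D4), (5, compl_graph V4 D4), (4, P3), (2, compl_graph V4 P3),
      (6, C4), (4, compl_graph V4 C4), (3, K13), (3, compl_graph V4 K13), (3, P4)]"

definition weighted_count :: "nat set \<Rightarrow> nat set set \<Rightarrow> nat" where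
  "weighted_count V E = (\<Sum>(w, H)\<leftarrow>weighted_graphs4. w * ind_count V4 H V E)"

lemma weighted_sum_eq_weighted_count:
  "weighted_sum V E = real (weighted_count V E) / (12 * real (card V choose 4))"
  unfolding weighted_sum_def weighted_count_def weighted_graphs4_def ind_density_eq_ind_count
  by (simp add: add_divide_distrib)

lemma weighted_graphs4_subset:
  assumes "(w, H) \<in> set weighted_graphs4"
  shows "H \<subseteq> pairs_on V4"
proof -
  have "\<forall>(w, H)\<in>set weighted_graphs4. H \<subseteq> pairs_on V4"
    unfolding weighted_graphs4_def K4_def D4_def P3_def C4_def K13_def P4_def compl_graph_def pairs_on_V4
    by code_simp
  then show ?thesis
    using assms by blast
qed

lemma sum_weighted_copies4: "(\<Sum>(w, H)\<leftarrow>weighted_graphs4. w * card (copies V4 H V4)) = 240"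
proof -
  have "copies V4 H V4 = (\<lambda>p. image ((!) p) ` H) ` permutations_of_set V4"
    if "(w, H) \<in> set weighted_graphs4" for w H
    using weighted_graphs4_subset[OF that] pairs_on_subset_Pow
    by (intro copies_upto_eq_permutations) (rule order.trans)
  then have "(\<Sum>(w, H)\<leftarrow>weighted_graphs4. w * card (copies V4 H V4))
      = (\<Sum>(w, H)\<leftarrow>weighted_graphs4. w * card ((\<lambda>p. image ((!) p) ` H) ` permutations_of_set V4))"
    by (intro arg_cong[where f = sum_list] map_cong refl) auto
  also have "\<dots> = 240"
    unfolding weighted_graphs4_def K4_def D4_def P3_def C4_def K13_def P4_def compl_graph_def pairs_on_V4
    by code_simp
  finally show ?thesis .
qed

lemma sum_weighted_count:
  assumes V: "finite V"
  shows "4 * (\<Sum>E\<in>Pow (pairs_on V). weighted_count V E) = 15 * (card V choose 4) * 2 ^ card (pairs_on V)"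
proof -
  let ?A = "Pow (pairs_on V)" and ?M = "(card V choose 4) * 2 ^ card (pairs_on V)"
  have swap: "(\<Sum>E\<in>?A. \<Sum>x\<leftarrow>xs. g x E) = (\<Sum>x\<leftarrow>xs. \<Sum>E\<in>?A. g x E)"
    for xs :: "(nat \<times> nat set set) list" and g :: "_ \<Rightarrow> _ \<Rightarrow> nat"
    by (induction xs) (simp_all add: sum.distrib)
  have graph: "64 * (\<Sum>E\<in>?A. w * ind_count V4 H V E) = w * card (copies V4 H V4) * ?M"
    if "(w, H) \<in> set weighted_graphs4" for w H
  proof -
    have "(\<Sum>E\<in>?A. ind_count V4 H V E) * 64 = card (copies V4 H V4) * ?M"
      using sum_ind_count[OF V _ weighted_graphs4_subset[OF that]] by (simp add: choose_two)
    then show ?thesis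
      by (simp add: sum_distrib_left[symmetric])
  qed
  have "64 * (\<Sum>E\<in>?A. weighted_count V E)
      = (\<Sum>(w, H)\<leftarrow>weighted_graphs4. 64 * (\<Sum>E\<in>?A. w * ind_count V4 H V E))"
    unfolding weighted_count_def swap sum_list_const_mult[symmetric] by (simp add: split_def)
  also have "\<dots> = (\<Sum>(w, H)\<leftarrow>weighted_graphs4. w * card (copies V4 H V4) * ?M)"
    using graph by (intro arg_cong[where f = sum_list] map_cong refl) auto
  also have "\<dots> = 240 * ?M"
    using sum_weighted_copies4 by (simp add: split_def sum_list_mult_const)
  finally show ?thesis
    by simp
qed

lemma in_Pi_iff_weighted_count:
  assumes "card V \<ge> 4"
  shows "in_Pi V E \<longleftrightarrow> 4 * weighted_count V E \<le> 15 * (card V choose 4)"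
proof -
  have "real (card V choose 4) > 0"
    using assms by simp
  then have "in_Pi V E \<longleftrightarrow> 4 * real (weighted_count V E) \<le> 15 * real (card V choose 4)"
    unfolding in_Pi_def weighted_sum_eq_weighted_count by (simp add: pos_divide_le_eq)
  then show ?thesis
    using of_nat_le_iff[where 'a = real, of "4 * weighted_count V E" "15 * (card V choose 4)"] by simp
qed

lemma card_Pow_pairs_on_le_mult_card_in_Pi:
  assumes V: "finite V" "card V \<ge> 4"
  shows "card (Pow (pairs_on V)) \<le> (15 * (card V choose 4) + 1) * card {E. E \<subseteq> pairs_on V \<and> in_Pi V E}"
proof -
  let ?A = "Pow (pairs_on V)" and ?C = "card V choose 4"
  have "(\<Sum>E\<in>?A. 4 * weighted_count V E) = 15 * ?C * card ?A"
    using sum_weighted_count[OF V(1)] finite_pairs_on[OF V(1)]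
    by (simp add: sum_distrib_left[symmetric] card_Pow)
  then have "card ?A \<le> (15 * ?C + 1) * card {E\<in>?A. 4 * weighted_count V E \<le> 15 * ?C}"
    using finite_pairs_on[OF V(1)] by (intro card_le_mult_card_le_mean) simp_all
  also have "{E\<in>?A. 4 * weighted_count V E \<le> 15 * ?C} = {E. E \<subseteq> pairs_on V \<and> in_Pi V E}"
    using in_Pi_iff_weighted_count[OF V(2)] by auto
  finally show ?thesis .
qed

lemma choose_4_bound:
  assumes "n \<ge> 1"
  shows "15 * (n choose 4) + 1 \<le> 2 * n ^ 4"
proof -
  have "(n choose 4) * 24 \<le> n ^ 4"
    using binomial_fact_pow[of n 4] by (simp add: fact_numeral)
  moreover have "1 \<le> n ^ 4"
    using assms by simp
  ultimately show ?thesis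
    by linarith
qed

theorem lemma2p5:
  fixes n :: nat
  assumes "n \<ge> 4"
  shows "prob_gnp_half n (in_Pi {0..<n}) \<ge> 1 / (2 * real n ^ 4)"
proof -
  let ?P = "pairs_on {0..<n}"
  let ?good = "{E. E \<subseteq> ?P \<and> in_Pi {0..<n} E}"
  have "card (Pow ?P) \<le> (15 * (n choose 4) + 1) * card ?good"
    using card_Pow_pairs_on_le_mult_card_in_Pi[of "{0..<n}"] assms by simp
  also have "\<dots> \<le> 2 * n ^ 4 * card ?good"
    using choose_4_bound assms by (intro mult_le_mono1) simp
  finally have "real (card (Pow ?P)) \<le> 2 * real n ^ 4 * real (card ?good)"
    using of_nat_le_iff[where 'a = real, of "card (Pow ?P)" "2 * n ^ 4 * card ?good"] by simp
  moreover have "card (Pow ?P) > 0"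
    using finite_pairs_on[of "{0..<n}"] by (simp add: card_Pow)
  ultimately show ?thesis
    using assms unfolding prob_gnp_half_def by (simp add: divide_simps mult.commute)
qed

end
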